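(* Let $\mu,\nu\in\mathcal{P}(\mathcal{X})$, $0<m_1\le m_2<\infty$, $K:\mathcal{X}\times\mathcal{X}\to(0,1]$ measurable with lower decay $l$, and let $(\alpha_1,\tilde\alpha_1)$, $(\alpha_2,\tilde\alpha_2)$ be pairs of tail functions (with $\mu(B_{m_1})>0$, $\nu(B_{m_1})>0$, $\alpha_1,\alpha_2>0$). Define \[ \tilde\beta_2(r)=\frac{1}{\nu(B_{m_1})}\sup_{a\ge r}\frac{\nu(B_a^{\mathsf c})}{\alpha_2(a)\wedge1}\ (r\ge m_1),\qquad \beta_2(r)=\frac{1}{\nu(B_{m_1})}\Big(\sup_{a\ge r}\frac{\nu(B_a^{\mathsf c})}{\tilde\alpha_2(a)}+\nu(B_r^{\mathsf c})\Big)\ (r\ge m_2). \] Let $r\ge m_2$ and assume $\tilde\alpha_1(m_2)\le0.5$, $\tilde\beta_2(m_1)\le0.5$ and $l(r)\le1$. Then for all $f\in\mathcal{F}^{\mu,norm}_{\alpha_1,\tilde\alpha_1}$ and $g\in\mathcal{G}^{\nu,norm}_{\alpha_2,\tilde\alpha_2}$, \[ \int L_{K^\top,\nu}(g)f\,d\mu\ge l(r)-\tilde\alpha_1(m_2)-4\tilde\beta_2(m_1)-4\alpha_1(r)-4\tilde\alpha_1(r)-5\beta_2(r)-5\tilde\beta_2(r). \]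
   Context: $\mathcal{X}$ is a Polish space with metric $d_{\mathcal{X}}$, $x_0$ fixed, $B_r=\{x:d_{\mathcal{X}}(x_0,x)\le r\}$, $B_r^{\mathsf c}=\mathcal{X}\setminus B_r$; $a\wedge b=\min\{a,b\}$. A non-increasing $l:[0,\infty)\to[0,\infty)$ is a lower decay of $K$ if $\inf_{x,y\in B_r}K(x,y)\ge l(r)$ for all $r>0$. $L_{K^\top,\nu}g(x)=\int K(y,x)g(y)\,\nu(dy)$. A tail function is a non-increasing $\alpha:(0,\infty)\to[0,\infty)$ with $\lim_{r\to\infty}\alpha(r)=0$. For $\rho\in\mathcal{P}(\mathcal{X})$: $\mathcal{F}^{\rho}_{\alpha,\tilde\alpha}$ is the set of $f\in L^2(\rho)$ with $f\mathbf 1_{B_{m_2}}\ge0$ $\rho$-a.s., $\int_{B_r^{\mathsf c}}f_+\,d\rho\le\alpha(r)\int f\,d\rho$ for all $r\ge m_1$, $\int_{B_r^{\mathsf c}}f_-\,d\rho\le\tilde\alpha(r)\int f\,d\rho$ for all $r\ge m_2$; $\mathcal{G}^{\rho}_{\alpha,\tilde\alpha}=\{g\in L^2(\rho):\int fg\,d\rho\ge0\ \forall f\in\mathcal{F}^{\rho}_{\alpha,\tilde\alpha}\}$; superscript $norm$ denotes elements with $\int\cdot\,d\rho=1$. *)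

theory Defs
  imports "HOL-Analysis.Analysis" "HOL-Probability.Probability"
begin

definition lower_decay :: "('a::metric_space) \<Rightarrow> ('a \<Rightarrow> 'a \<Rightarrow> real) \<Rightarrow> (real \<Rightarrow> real) \<Rightarrow> bool" where
  "lower_decay x0 K l \<longleftrightarrow>
     antimono_on {0..} l \<and> (\<forall>r\<ge>0. l r \<ge> 0) \<and>
     (\<forall>r>0. \<forall>x\<in>cball x0 r. \<forall>y\<in>cball x0 r. l r \<le> K x y)"

definition tail_function :: "(real \<Rightarrow> real) \<Rightarrow> bool" where
  "tail_function \<alpha> \<longleftrightarrow>
     antimono_on {0<..} \<alpha> \<and> (\<forall>r>0. \<alpha> r \<ge> 0) \<and> (\<alpha> \<longlongrightarrow> 0) at_top"

definition L2 :: "'a measure \<Rightarrow> ('a \<Rightarrow> real) set" where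
  "L2 \<rho> = {f. f \<in> borel_measurable \<rho> \<and> integrable \<rho> (\<lambda>x. (f x)\<^sup>2)}"

definition Lop :: "('a \<Rightarrow> 'a \<Rightarrow> real) \<Rightarrow> 'a measure \<Rightarrow> ('a \<Rightarrow> real) \<Rightarrow> 'a \<Rightarrow> real" where
  "Lop K \<nu> g x = (\<integral>y. K y x * g y \<partial>\<nu>)"

definition Fcls :: "('a::metric_space) \<Rightarrow> real \<Rightarrow> real \<Rightarrow> 'a measure \<Rightarrow> (real \<Rightarrow> real) \<Rightarrow> (real \<Rightarrow> real) \<Rightarrow> ('a \<Rightarrow> real) set" where
  "Fcls x0 m1 m2 \<rho> \<alpha> \<alpha>' = {f \<in> L2 \<rho>.
     (AE x in \<rho>. x \<in> cball x0 m2 \<longrightarrow> f x \<ge> 0) \<and>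
     (\<forall>r\<ge>m1. (\<integral>x\<in>space \<rho> - cball x0 r. max (f x) 0 \<partial>\<rho>) \<le> \<alpha> r * (\<integral>x. f x \<partial>\<rho>)) \<and>
     (\<forall>r\<ge>m2. (\<integral>x\<in>space \<rho> - cball x0 r. max (- f x) 0 \<partial>\<rho>) \<le> \<alpha>' r * (\<integral>x. f x \<partial>\<rho>))}"

definition Gcls :: "('a::metric_space) \<Rightarrow> real \<Rightarrow> real \<Rightarrow> 'a measure \<Rightarrow> (real \<Rightarrow> real) \<Rightarrow> (real \<Rightarrow> real) \<Rightarrow> ('a \<Rightarrow> real) set" where
  "Gcls x0 m1 m2 \<rho> \<alpha> \<alpha>' = {g \<in> L2 \<rho>. \<forall>f \<in> Fcls x0 m1 m2 \<rho> \<alpha> \<alpha>'. (\<integral>x. f x * g x \<partial>\<rho>) \<ge> 0}"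

definition Fnorm where
  "Fnorm x0 m1 m2 \<rho> \<alpha> \<alpha>' = {f \<in> Fcls x0 m1 m2 \<rho> \<alpha> \<alpha>'. (\<integral>x. f x \<partial>\<rho>) = 1}"

definition Gnorm where
  "Gnorm x0 m1 m2 \<rho> \<alpha> \<alpha>' = {g \<in> Gcls x0 m1 m2 \<rho> \<alpha> \<alpha>'. (\<integral>x. g x \<partial>\<rho>) = 1}"

text \<open>beta tilde and beta, valued in extended reals (the suprema may be infinite;
  division by 0 of a positive number gives infinity).\<close>

definition beta_tilde :: "('a::metric_space) \<Rightarrow> real \<Rightarrow> 'a measure \<Rightarrow> (real \<Rightarrow> real) \<Rightarrow> real \<Rightarrow> ereal" where
  "beta_tilde x0 m1 \<nu> \<alpha> r =
     (SUP a\<in>{r..}. ereal (measure \<nu> (space \<nu> - cball x0 a)) / ereal (min (\<alpha> a) 1))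
       / ereal (measure \<nu> (cball x0 m1))"

definition beta :: "('a::metric_space) \<Rightarrow> real \<Rightarrow> 'a measure \<Rightarrow> (real \<Rightarrow> real) \<Rightarrow> real \<Rightarrow> ereal" where
  "beta x0 m1 \<nu> \<alpha>' r =
     ((SUP a\<in>{r..}. ereal (measure \<nu> (space \<nu> - cball x0 a)) / ereal (\<alpha>' a))
        + ereal (measure \<nu> (space \<nu> - cball x0 r)))
       / ereal (measure \<nu> (cball x0 m1))"

end

theory Submission
  imports Defs
begin

(* As g lies in the dual cone of F, it can be tested against
   the elements  b 1_{B_m1} + 1_{g<0}  and  c 1_{B_m1} - 1_{g>0, outside B_r}  of F, where
   b = beta_tilde(m1) and c = beta(r) are exactly what their tail conditions require.  This bounds
   int g- by b int_{B_m1} g and the positive mass of g outside B_r by c int_{B_m1} g; since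
   int g = 1 and b <= 1/2, int_{B_m1} g <= 2.  For f, nonnegativity on B_m2 and the tail
   conditions bound int f- by alpha1'(m2) and the positive mass of f outside B_r by alpha1(r).
   Pointwise  l(r) 1_{B_r} int_{B_r} g+ - int g- <= L g <= 1 + int g-,  and integrating against
   f+ and f- gives the bound, in fact with the smaller error
   alpha1'(m2) + 4 beta_tilde(m1) + alpha1(r) + 2 beta(r). *)

lemma ereal_divide_le_imp_le:
  assumes "ereal t / ereal a \<le> ereal s" "0 \<le> t" "0 \<le> a"
  shows "t \<le> a * s"
proof (cases "a = 0")
  case True
  then have "ereal t * \<infinity> \<le> ereal s" using assms(1) by simp
  then have "t = 0" using assms(2) by (cases "t = 0") (auto simp: ereal_mult_infty)
  then show ?thesis using True by simp
next
  case False
  then show ?thesis using assms by (simp add: divide_le_eq mult.commute)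
qed

lemma ereal_divide_eq_ereal:
  assumes "x / ereal v = ereal b" "0 < v"
  shows "x = ereal (v * b)"
  using assms ereal_divide_eq[of "ereal v" x "ereal b"] by simp

lemma mult_ge_one_minus_deficits:
  fixes l p q a t :: real
  assumes "0 \<le> l" "l \<le> 1" "0 \<le> p" "0 \<le> q" "1 - t \<le> p" "1 - a \<le> q" "0 \<le> a" "0 \<le> t"
  shows "l - a - t \<le> l * p * q"
proof (cases "a \<le> 1 \<and> t \<le> 1")
  case True
  have "0 \<le> a * l * t" "l * t \<le> t" "l * a \<le> a"
    using assms by (simp_all add: mult_left_le_one_le)
  moreover have "l * (1 - t) * (1 - a) = l - l * t - l * a + a * l * t" by (simp add: algebra_simps)
  ultimately have "l - a - t \<le> l * (1 - t) * (1 - a)" by linarith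
  also have "\<dots> \<le> l * p * q"
    using assms True by (intro mult_mono mult_left_mono) auto
  finally show ?thesis .
next
  case False
  then show ?thesis using assms by (auto intro: order.trans[of _ 0])
qed

lemma bounded_measurable_in_L2:
  assumes "finite_measure M" "h \<in> borel_measurable M" "\<And>x. \<bar>h x\<bar> \<le> B"
  shows "h \<in> L2 M"
  unfolding L2_def
proof (intro CollectI conjI finite_measure.integrable_const_bound[where B="B\<^sup>2"])
  show "AE x in M. norm ((h x)\<^sup>2) \<le> B\<^sup>2"
    using assms(3) by (intro AE_I2) (metis abs_ge_zero norm_power power2_abs power_mono real_norm_def)
qed (use assms in auto)

lemma L2_integrable:
  assumes "finite_measure M" "g \<in> L2 M"
  shows "integrable M g"
  using assms finite_measure.square_integrable_imp_integrable unfolding L2_def by blast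

lemma set_integral_le_measure:
  assumes "finite_measure M" "A \<in> sets M" "C \<in> sets M" "h \<in> borel_measurable M"
    and "\<And>x. x \<in> A \<Longrightarrow> \<bar>h x\<bar> \<le> indicator C x"
  shows "(\<integral>x\<in>A. h x \<partial>M) \<le> measure M C"
proof -
  interpret finite_measure M by fact
  have "(\<integral>x\<in>A. h x \<partial>M) \<le> (\<integral>x. indicator C x \<partial>M)"
    unfolding set_lebesgue_integral_def
  proof (rule integral_mono)
    show "integrable M (\<lambda>x. indicator A x *\<^sub>R h x)"
      using assms by (intro integrable_const_bound[where B=1])
        (auto split: split_indicator intro: order.trans)
    show "indicator A x *\<^sub>R h x \<le> indicator C x" for x
      using assms(5)[of x] by (auto split: split_indicator)
  qed (use assms(3) in \<open>auto simp: less_top[symmetric]\<close>)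
  then show ?thesis using assms(3) by simp
qed

lemma integral_pos_part_eq:
  fixes f :: "'a \<Rightarrow> real"
  assumes "integrable M f"
  shows "(\<integral>x. max (f x) 0 \<partial>M) = (\<integral>x. f x \<partial>M) + (\<integral>x. max (- f x) 0 \<partial>M)"
proof -
  have "(\<integral>x. f x \<partial>M) = (\<integral>x. max (f x) 0 - max (- f x) 0 \<partial>M)"
    by (intro Bochner_Integration.integral_cong) auto
  also have "\<dots> = (\<integral>x. max (f x) 0 \<partial>M) - (\<integral>x. max (- f x) 0 \<partial>M)"
    using assms by (intro Bochner_Integration.integral_diff) auto
  finally show ?thesis by simp
qed

lemma integral_indicator_split:
  fixes f :: "'a \<Rightarrow> real"
  assumes "integrable M f" "C \<in> sets M" "space M = UNIV"
  shows "(\<integral>x. f x \<partial>M) = (\<integral>x. indicator C x * f x \<partial>M) + (\<integral>x. indicator (- C) x * f x \<partial>M)"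
proof -
  have "- C \<in> sets M" using sets.compl_sets[OF assms(2)] assms(3) by (simp add: Compl_eq_Diff_UNIV)
  then have "integrable M (\<lambda>x. indicator C x * f x)" "integrable M (\<lambda>x. indicator (- C) x * f x)"
    using integrable_mult_indicator[of _ M f] assms(1,2) by simp_all
  then have "(\<integral>x. indicator C x * f x + indicator (- C) x * f x \<partial>M)
      = (\<integral>x. indicator C x * f x \<partial>M) + (\<integral>x. indicator (- C) x * f x \<partial>M)"
    by (intro Bochner_Integration.integral_add)
  moreover have "(\<lambda>x. indicator C x * f x + indicator (- C) x * f x) = f"
    by (auto split: split_indicator)
  ultimately show ?thesis by simp
qed

lemma integral_le_split_pos_part:
  fixes f :: "'a \<Rightarrow> real"
  assumes "integrable M f" "C \<in> sets M" "space M = UNIV"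
  shows "(\<integral>x. f x \<partial>M)
    \<le> (\<integral>x. indicator C x * max (f x) 0 \<partial>M) + (\<integral>x. indicator (- C) x * max (f x) 0 \<partial>M)"
proof -
  have "(\<integral>x. f x \<partial>M) \<le> (\<integral>x. max (f x) 0 \<partial>M)"
    using integral_pos_part_eq[OF assms(1)] by simp
  also have "\<dots> = (\<integral>x. indicator C x * max (f x) 0 \<partial>M) + (\<integral>x. indicator (- C) x * max (f x) 0 \<partial>M)"
    using assms by (intro integral_indicator_split) auto
  finally show ?thesis .
qed

lemma integral_mult_ge_of_bounds:
  fixes f L :: "'a \<Rightarrow> real"
  assumes "integrable \<mu> f" "L \<in> borel_measurable \<mu>" "C \<in> sets \<mu>" "0 \<le> c"
    and lower: "\<And>x. c * indicator C x - N \<le> L x" and upper: "\<And>x. L x \<le> U"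
  shows "c * (\<integral>x. indicator C x * max (f x) 0 \<partial>\<mu>) - N * (\<integral>x. max (f x) 0 \<partial>\<mu>)
      - U * (\<integral>x. max (- f x) 0 \<partial>\<mu>) \<le> (\<integral>x. L x * f x \<partial>\<mu>)"
proof -
  have int_pos: "integrable \<mu> (\<lambda>x. indicator C x * max (f x) 0)"
    using integrable_mult_indicator[of C \<mu> "\<lambda>x. max (f x) 0"] assms(1,3) by simp
  have L_abs: "\<bar>L x\<bar> \<le> \<bar>N\<bar> + \<bar>U\<bar>" for x
  proof -
    have "0 \<le> c * indicator C x" using \<open>0 \<le> c\<close> by simp
    then show ?thesis
      using lower[of x] upper[of x] abs_ge_self[of N] abs_ge_self[of U] abs_ge_minus_self[of U]
      unfolding abs_le_iff by linarith
  qed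
  have "integrable \<mu> (\<lambda>x. L x * f x)"
  proof (rule Bochner_Integration.integrable_bound)
    show "integrable \<mu> (\<lambda>x. (\<bar>N\<bar> + \<bar>U\<bar>) * f x)" using assms(1) by simp
    show "(\<lambda>x. L x * f x) \<in> borel_measurable \<mu>"
      using assms(2) borel_measurable_integrable[OF assms(1)] by (rule borel_measurable_times)
    show "AE x in \<mu>. norm (L x * f x) \<le> norm ((\<bar>N\<bar> + \<bar>U\<bar>) * f x)"
      using L_abs by (intro AE_I2) (simp add: abs_mult mult_right_mono)
  qed
  moreover have "c * (indicator C x * max (f x) 0) - N * max (f x) 0 - U * max (- f x) 0
      \<le> L x * f x" for x
  proof (cases "0 \<le> f x")
    case True
    then have "(c * indicator C x - N) * f x \<le> L x * f x" by (intro mult_right_mono lower)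
    then show ?thesis using True by (simp add: algebra_simps)
  next
    case False
    then have "U * f x \<le> L x * f x" by (intro mult_right_mono_neg upper) simp
    then show ?thesis using False by simp
  qed
  moreover have "integrable \<mu> (\<lambda>x. c * (indicator C x * max (f x) 0) - N * max (f x) 0
      - U * max (- f x) 0)"
    using int_pos assms(1) by (intro Bochner_Integration.integrable_diff integrable_mult_right) auto
  ultimately have "(\<integral>x. c * (indicator C x * max (f x) 0) - N * max (f x) 0 - U * max (- f x) 0 \<partial>\<mu>)
      \<le> (\<integral>x. L x * f x \<partial>\<mu>)"
    by (intro integral_mono)
  moreover have "integrable \<mu> (\<lambda>x. max (f x) 0)" "integrable \<mu> (\<lambda>x. max (- f x) 0)"
    using assms(1) by auto
  ultimately show ?thesis using int_pos
    by (simp only: Bochner_Integration.integral_diff Bochner_Integration.integrable_diff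
        integrable_mult_right integral_mult_right_zero)
qed

lemma tail_function_nonneg:
  assumes "tail_function \<alpha>" "0 < m" "m \<le> a"
  shows "0 \<le> \<alpha> a"
  using assms unfolding tail_function_def by auto

lemma tail_function_antimono:
  assumes "tail_function \<alpha>" "0 < m"
  shows "antimono_on {m..} \<alpha>"
  using assms unfolding tail_function_def by (auto elim: monotone_on_subset)

lemma beta_tilde_nonneg:
  assumes "0 \<le> \<alpha> r"
  shows "0 \<le> beta_tilde x0 m1 \<nu> \<alpha> r"
proof -
  have "0 \<le> ereal (measure \<nu> (space \<nu> - cball x0 r)) / ereal (min (\<alpha> r) 1)"
    using assms by (intro zero_le_divide_ereal) auto
  also have "\<dots> \<le> (SUP a\<in>{r..}. ereal (measure \<nu> (space \<nu> - cball x0 a)) / ereal (min (\<alpha> a) 1))"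
    by (intro SUP_upper) auto
  finally show ?thesis unfolding beta_tilde_def by simp
qed

lemma beta_nonneg:
  assumes "0 \<le> \<alpha> r"
  shows "0 \<le> beta x0 m1 \<nu> \<alpha> r"
proof -
  have "0 \<le> ereal (measure \<nu> (space \<nu> - cball x0 r)) / ereal (\<alpha> r)"
    using assms by (intro zero_le_divide_ereal) auto
  also have "\<dots> \<le> (SUP a\<in>{r..}. ereal (measure \<nu> (space \<nu> - cball x0 a)) / ereal (\<alpha> a))"
    by (intro SUP_upper) auto
  finally show ?thesis unfolding beta_def by simp
qed

lemma beta_tilde_tail_bound:
  assumes "beta_tilde x0 m1 \<nu> \<alpha> r = ereal b" "0 < measure \<nu> (cball x0 m1)"
    and "\<forall>a\<ge>r. 0 \<le> \<alpha> a" "a \<ge> r"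
  shows "measure \<nu> (space \<nu> - cball x0 a) \<le> \<alpha> a * (measure \<nu> (cball x0 m1) * b)"
proof -
  let ?v = "measure \<nu> (cball x0 m1)"
  have "0 \<le> b" using beta_tilde_nonneg[of \<alpha> r x0 m1 \<nu>] assms by simp
  have "ereal (measure \<nu> (space \<nu> - cball x0 a)) / ereal (min (\<alpha> a) 1)
      \<le> (SUP a\<in>{r..}. ereal (measure \<nu> (space \<nu> - cball x0 a)) / ereal (min (\<alpha> a) 1))"
    using assms(4) by (intro SUP_upper) auto
  also have "\<dots> = ereal (?v * b)"
    using assms(1,2) unfolding beta_tilde_def by (rule ereal_divide_eq_ereal)
  finally have "measure \<nu> (space \<nu> - cball x0 a) \<le> min (\<alpha> a) 1 * (?v * b)"
    using assms(3,4) by (intro ereal_divide_le_imp_le) auto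
  also have "\<dots> \<le> \<alpha> a * (?v * b)"
    using \<open>0 \<le> b\<close> by (intro mult_right_mono) auto
  finally show ?thesis .
qed

lemma beta_tail_bound:
  assumes "beta x0 m1 \<nu> \<alpha> r = ereal c" "0 < measure \<nu> (cball x0 m1)" "\<forall>a\<ge>r. 0 \<le> \<alpha> a"
  shows "measure \<nu> (space \<nu> - cball x0 r) \<le> measure \<nu> (cball x0 m1) * c"
    and "\<And>a. a \<ge> r \<Longrightarrow> measure \<nu> (space \<nu> - cball x0 a)
           \<le> \<alpha> a * (measure \<nu> (cball x0 m1) * c - measure \<nu> (space \<nu> - cball x0 r))"
proof -
  let ?v = "measure \<nu> (cball x0 m1)" and ?w = "measure \<nu> (space \<nu> - cball x0 r)"
  define S where "S = (SUP a\<in>{r..}. ereal (measure \<nu> (space \<nu> - cball x0 a)) / ereal (\<alpha> a))"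
  have "S + ereal ?w = ereal (?v * c)"
    using assms(1,2) unfolding beta_def S_def by (rule ereal_divide_eq_ereal)
  moreover have "0 \<le> S"
    unfolding S_def using assms(3)
    by (intro order.trans[OF zero_le_divide_ereal SUP_upper[of r]]) auto
  ultimately have S: "S = ereal (?v * c - ?w)" and "0 \<le> ?v * c - ?w"
    by (cases S; simp)+
  then show "?w \<le> ?v * c" by simp
  fix a assume "a \<ge> r"
  then have "ereal (measure \<nu> (space \<nu> - cball x0 a)) / ereal (\<alpha> a) \<le> ereal (?v * c - ?w)"
    unfolding S[symmetric] S_def by (intro SUP_upper) auto
  then show "measure \<nu> (space \<nu> - cball x0 a) \<le> \<alpha> a * (?v * c - ?w)"
    using assms(3) \<open>a \<ge> r\<close> by (intro ereal_divide_le_imp_le) auto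
qed

lemma Fcls_neg_part_le:
  fixes f :: "'a::metric_space \<Rightarrow> real"
  assumes "sets \<mu> = sets borel" "f \<in> Fcls x0 m1 m2 \<mu> \<alpha> \<alpha>'"
  shows "(\<integral>x. max (- f x) 0 \<partial>\<mu>) \<le> \<alpha>' m2 * (\<integral>x. f x \<partial>\<mu>)"
proof -
  have space: "space \<mu> = UNIV" using sets_eq_imp_space_eq[OF assms(1)] by simp
  have [measurable]: "cball x0 s \<in> sets \<mu>" for s using assms(1) by simp
  have [measurable]: "f \<in> borel_measurable \<mu>" using assms(2) unfolding Fcls_def L2_def by blast
  have "AE x in \<mu>. x \<in> cball x0 m2 \<longrightarrow> 0 \<le> f x" using assms(2) unfolding Fcls_def by blast
  then have "(\<integral>x. max (- f x) 0 \<partial>\<mu>) = (\<integral>x\<in>space \<mu> - cball x0 m2. max (- f x) 0 \<partial>\<mu>)"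
    unfolding set_lebesgue_integral_def
    by (intro integral_cong_AE) (auto simp: space split: split_indicator)
  also have "\<dots> \<le> \<alpha>' m2 * (\<integral>x. f x \<partial>\<mu>)" using assms(2) unfolding Fcls_def by blast
  finally show ?thesis .
qed

lemma Fcls_pos_part_ball_ge:
  fixes f :: "'a::metric_space \<Rightarrow> real"
  assumes "finite_measure \<mu>" "sets \<mu> = sets borel" "f \<in> Fcls x0 m1 m2 \<mu> \<alpha> \<alpha>'" "m1 \<le> r"
  shows "(1 - \<alpha> r) * (\<integral>x. f x \<partial>\<mu>) \<le> (\<integral>x. indicator (cball x0 r) x * max (f x) 0 \<partial>\<mu>)"
proof -
  have space: "space \<mu> = UNIV" using sets_eq_imp_space_eq[OF assms(2)] by simp
  have "integrable \<mu> f" using assms(1,3) L2_integrable unfolding Fcls_def by blast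
  have "(\<integral>x. indicator (- cball x0 r) x * max (f x) 0 \<partial>\<mu>)
      = (\<integral>x\<in>space \<mu> - cball x0 r. max (f x) 0 \<partial>\<mu>)"
    by (simp add: space set_lebesgue_integral_def Compl_eq_Diff_UNIV)
  also have "\<dots> \<le> \<alpha> r * (\<integral>x. f x \<partial>\<mu>)"
    using assms(3,4) unfolding Fcls_def by blast
  finally show ?thesis
    using integral_le_split_pos_part[OF \<open>integrable \<mu> f\<close> _ space, of "cball x0 r"] assms(2)
    by (simp add: algebra_simps)
qed

lemma ball_plus_indicator_in_Fcls:
  assumes "finite_measure \<nu>" "sets \<nu> = sets borel" "S \<in> sets \<nu>"
    and "0 \<le> b" "\<forall>a\<ge>m1. 0 \<le> \<alpha> a" "\<forall>a\<ge>m2. 0 \<le> \<alpha>' a"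
    and tail: "\<And>a. a \<ge> m1 \<Longrightarrow>
      measure \<nu> (space \<nu> - cball x0 a) \<le> \<alpha> a * (measure \<nu> (cball x0 m1) * b)"
  shows "(\<lambda>y. b * indicator (cball x0 m1) y + indicator S y) \<in> Fcls x0 m1 m2 \<nu> \<alpha> \<alpha>'"
    (is "?h \<in> _")
proof -
  interpret finite_measure \<nu> by fact
  have [measurable]: "cball x0 s \<in> sets \<nu>" for s using assms(2) by simp
  have h_nonneg: "0 \<le> ?h y" for y using \<open>0 \<le> b\<close> by simp
  have int_h: "measure \<nu> (cball x0 m1) * b \<le> (\<integral>y. ?h y \<partial>\<nu>)"
    using assms(3) by (simp add: less_top[symmetric])
  show ?thesis
    unfolding Fcls_def
  proof (intro CollectI conjI allI impI)
    show "?h \<in> L2 \<nu>"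
      by (rule bounded_measurable_in_L2[OF assms(1) _, where B="b + 1"])
        (use assms(3,4) in \<open>auto split: split_indicator\<close>)
    show "AE x in \<nu>. x \<in> cball x0 m2 \<longrightarrow> 0 \<le> ?h x" using h_nonneg by simp
  next
    fix a
    assume "m1 \<le> a"
    have "(\<integral>x\<in>space \<nu> - cball x0 a. max (?h x) 0 \<partial>\<nu>) \<le> measure \<nu> (space \<nu> - cball x0 a)"
      by (rule set_integral_le_measure[OF assms(1)])
        (use \<open>m1 \<le> a\<close> h_nonneg assms(3) in \<open>auto split: split_indicator\<close>)
    also have "\<dots> \<le> \<alpha> a * (measure \<nu> (cball x0 m1) * b)" using \<open>m1 \<le> a\<close> by (rule tail)
    also have "\<dots> \<le> \<alpha> a * (\<integral>y. ?h y \<partial>\<nu>)"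
      using int_h assms(5) \<open>m1 \<le> a\<close> by (intro mult_left_mono) auto
    finally show "(\<integral>x\<in>space \<nu> - cball x0 a. max (?h x) 0 \<partial>\<nu>) \<le> \<alpha> a * (\<integral>y. ?h y \<partial>\<nu>)" .
  next
    fix a
    assume "m2 \<le> a"
    have "max (- ?h x) 0 = 0" for x using h_nonneg[of x] by linarith
    moreover have "0 \<le> (\<integral>y. ?h y \<partial>\<nu>)" using h_nonneg by simp
    ultimately show "(\<integral>x\<in>space \<nu> - cball x0 a. max (- ?h x) 0 \<partial>\<nu>) \<le> \<alpha>' a * (\<integral>y. ?h y \<partial>\<nu>)"
      using assms(6) \<open>m2 \<le> a\<close> by simp
  qed
qed

lemma ball_minus_outer_indicator_in_Fcls:
  assumes "finite_measure \<nu>" "sets \<nu> = sets borel" "S \<in> sets \<nu>" "S \<inter> cball x0 r = {}"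
    and "m1 \<le> m2" "m2 \<le> r" "0 \<le> c" "\<forall>a\<ge>m1. 0 \<le> \<alpha> a"
    and "antimono_on {m2..} \<alpha>'" "\<forall>a\<ge>m2. 0 \<le> \<alpha>' a"
    and ball: "measure \<nu> (space \<nu> - cball x0 r) \<le> measure \<nu> (cball x0 m1) * c"
    and tail: "\<And>a. a \<ge> r \<Longrightarrow> measure \<nu> (space \<nu> - cball x0 a)
      \<le> \<alpha>' a * (measure \<nu> (cball x0 m1) * c - measure \<nu> (space \<nu> - cball x0 r))"
  shows "(\<lambda>y. c * indicator (cball x0 m1) y - indicator S y) \<in> Fcls x0 m1 m2 \<nu> \<alpha> \<alpha>'"
    (is "?h \<in> _")
proof -
  interpret finite_measure \<nu> by fact
  have [measurable]: "cball x0 s \<in> sets \<nu>" for s using assms(2) by simp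
  define s where "s = measure \<nu> (cball x0 m1) * c - measure \<nu> (space \<nu> - cball x0 r)"
  have "0 \<le> s" using ball by (simp add: s_def)
  have "measure \<nu> S \<le> measure \<nu> (space \<nu> - cball x0 r)"
    using assms(3,4) sets.sets_into_space by (intro finite_measure_mono) auto
  then have int_h: "s \<le> (\<integral>y. ?h y \<partial>\<nu>)"
    using assms(3) unfolding s_def by (simp add: less_top[symmetric])
  have h_ball: "0 \<le> ?h x" if "x \<in> cball x0 m2" for x
  proof -
    have "x \<notin> S" using that assms(4,6) by auto
    then show ?thesis using \<open>0 \<le> c\<close> by simp
  qed
  show ?thesis
    unfolding Fcls_def
  proof (intro CollectI conjI allI impI)
    show "?h \<in> L2 \<nu>"
      by (rule bounded_measurable_in_L2[OF assms(1) _, where B="c + 1"])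
        (use assms(3,7) in \<open>auto split: split_indicator\<close>)
    show "AE x in \<nu>. x \<in> cball x0 m2 \<longrightarrow> 0 \<le> ?h x" using h_ball by simp
  next
    fix a
    assume "m1 \<le> a"
    then have "(\<integral>x\<in>space \<nu> - cball x0 a. max (?h x) 0 \<partial>\<nu>) = 0"
      by (auto simp: set_lebesgue_integral_def split: split_indicator intro!: integral_eq_zero_AE)
    moreover have "0 \<le> \<alpha> a * (\<integral>y. ?h y \<partial>\<nu>)"
      using assms(8) \<open>m1 \<le> a\<close> int_h \<open>0 \<le> s\<close> by simp
    ultimately show "(\<integral>x\<in>space \<nu> - cball x0 a. max (?h x) 0 \<partial>\<nu>) \<le> \<alpha> a * (\<integral>y. ?h y \<partial>\<nu>)"
      by simp
  next
    fix a
    assume "m2 \<le> a"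
    have "(\<integral>x\<in>space \<nu> - cball x0 a. max (- ?h x) 0 \<partial>\<nu>)
        \<le> measure \<nu> (space \<nu> - cball x0 (max a r))"
      by (rule set_integral_le_measure[OF assms(1)])
        (use assms(3,4,5,7) \<open>m2 \<le> a\<close> sets.sets_into_space in \<open>auto split: split_indicator\<close>)
    also have "\<dots> \<le> \<alpha>' (max a r) * s" unfolding s_def by (rule tail) simp
    also have "\<dots> \<le> \<alpha>' a * s"
      using \<open>m2 \<le> a\<close> \<open>0 \<le> s\<close> assms(9) by (intro mult_right_mono) (auto intro: monotone_onD)
    also have "\<dots> \<le> \<alpha>' a * (\<integral>y. ?h y \<partial>\<nu>)"
      using assms(10) \<open>m2 \<le> a\<close> int_h by (intro mult_left_mono) auto
    finally show "(\<integral>x\<in>space \<nu> - cball x0 a. max (- ?h x) 0 \<partial>\<nu>) \<le> \<alpha>' a * (\<integral>y. ?h y \<partial>\<nu>)" .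
  qed
qed

lemma Gcls_neg_part_le:
  fixes g :: "'a::metric_space \<Rightarrow> real"
  assumes "prob_space \<nu>" "sets \<nu> = sets borel" and g: "g \<in> Gcls x0 m1 m2 \<nu> \<alpha> \<alpha>'"
    and "0 \<le> b" "\<forall>a\<ge>m1. 0 \<le> \<alpha> a" "\<forall>a\<ge>m2. 0 \<le> \<alpha>' a"
    and "\<And>a. a \<ge> m1 \<Longrightarrow>
      measure \<nu> (space \<nu> - cball x0 a) \<le> \<alpha> a * (measure \<nu> (cball x0 m1) * b)"
  shows "(\<integral>y. max (- g y) 0 \<partial>\<nu>) \<le> b * (\<integral>y. indicator (cball x0 m1) y * g y \<partial>\<nu>)"
proof -
  interpret prob_space \<nu> by fact
  have space: "space \<nu> = UNIV" using sets_eq_imp_space_eq[OF assms(2)] by simp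
  have "g \<in> L2 \<nu>" using g unfolding Gcls_def by blast
  then have [measurable]: "g \<in> borel_measurable \<nu>" and "integrable \<nu> g"
    using L2_integrable[OF finite_measure_axioms] unfolding L2_def by blast+
  define S where "S = {y \<in> space \<nu>. g y < 0}"
  define h where "h y = b * indicator (cball x0 m1) y + indicator S y" for y
  have "S \<in> sets \<nu>" unfolding S_def by measurable
  then have "h \<in> Fcls x0 m1 m2 \<nu> \<alpha> \<alpha>'"
    unfolding h_def[abs_def] using assms(2,4-7) finite_measure_axioms
    by (intro ball_plus_indicator_in_Fcls) auto
  then have "0 \<le> (\<integral>y. h y * g y \<partial>\<nu>)" using g unfolding Gcls_def by blast
  also have "(\<lambda>y. h y * g y) = (\<lambda>y. b * (indicator (cball x0 m1) y * g y) - max (- g y) 0)"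
    by (auto simp: h_def S_def space fun_eq_iff algebra_simps split: split_indicator)
  moreover have "integrable \<nu> (\<lambda>y. indicator (cball x0 m1) y * g y)"
    using integrable_mult_indicator[of "cball x0 m1" \<nu> g] \<open>integrable \<nu> g\<close> assms(2) by simp
  ultimately show ?thesis
    using \<open>integrable \<nu> g\<close> by simp
qed

lemma Gcls_pos_tail_le:
  fixes g :: "'a::metric_space \<Rightarrow> real"
  assumes "prob_space \<nu>" "sets \<nu> = sets borel" and g: "g \<in> Gcls x0 m1 m2 \<nu> \<alpha> \<alpha>'"
    and "m1 \<le> m2" "m2 \<le> r" "0 \<le> c" "\<forall>a\<ge>m1. 0 \<le> \<alpha> a"
    and "antimono_on {m2..} \<alpha>'" "\<forall>a\<ge>m2. 0 \<le> \<alpha>' a"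
    and "measure \<nu> (space \<nu> - cball x0 r) \<le> measure \<nu> (cball x0 m1) * c"
    and "\<And>a. a \<ge> r \<Longrightarrow> measure \<nu> (space \<nu> - cball x0 a)
      \<le> \<alpha>' a * (measure \<nu> (cball x0 m1) * c - measure \<nu> (space \<nu> - cball x0 r))"
  shows "(\<integral>y. indicator (- cball x0 r) y * max (g y) 0 \<partial>\<nu>)
    \<le> c * (\<integral>y. indicator (cball x0 m1) y * g y \<partial>\<nu>)"
proof -
  interpret prob_space \<nu> by fact
  have space: "space \<nu> = UNIV" using sets_eq_imp_space_eq[OF assms(2)] by simp
  have [measurable]: "cball x0 s \<in> sets \<nu>" for s using assms(2) by simp
  have "g \<in> L2 \<nu>" using g unfolding Gcls_def by blast
  then have [measurable]: "g \<in> borel_measurable \<nu>" and "integrable \<nu> g"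
    using L2_integrable[OF finite_measure_axioms] unfolding L2_def by blast+
  define S where "S = {y \<in> space \<nu>. 0 < g y} - cball x0 r"
  define h where "h y = c * indicator (cball x0 m1) y - indicator S y" for y
  have "S \<in> sets \<nu>" unfolding S_def by measurable
  then have "h \<in> Fcls x0 m1 m2 \<nu> \<alpha> \<alpha>'"
    unfolding h_def[abs_def] using assms(2,4-11) finite_measure_axioms
    by (intro ball_minus_outer_indicator_in_Fcls) (auto simp: S_def)
  then have "0 \<le> (\<integral>y. h y * g y \<partial>\<nu>)" using g unfolding Gcls_def by blast
  also have "(\<lambda>y. h y * g y)
      = (\<lambda>y. c * (indicator (cball x0 m1) y * g y) - indicator (- cball x0 r) y * max (g y) 0)"
    by (auto simp: h_def S_def space fun_eq_iff algebra_simps split: split_indicator)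
  moreover have "integrable \<nu> (\<lambda>y. indicator (cball x0 m1) y * g y)"
    using integrable_mult_indicator[of "cball x0 m1" \<nu> g] \<open>integrable \<nu> g\<close> by simp
  moreover have "integrable \<nu> (\<lambda>y. indicator (- cball x0 r) y * max (g y) 0)"
    using integrable_mult_indicator[of "- cball x0 r" \<nu> "\<lambda>y. max (g y) 0"] \<open>integrable \<nu> g\<close>
      sets.compl_sets[of "cball x0 r" \<nu>] by (simp add: space Compl_eq_Diff_UNIV)
  ultimately show ?thesis by simp
qed

lemma Gnorm_neg_part_and_tail_le:
  fixes g :: "'a::metric_space \<Rightarrow> real"
  assumes "prob_space \<nu>" "sets \<nu> = sets borel" "g \<in> Gnorm x0 m1 m2 \<nu> \<alpha> \<alpha>'"
    and "0 < m1" "m1 \<le> m2" "tail_function \<alpha>'" "\<forall>s>0. 0 < \<alpha> s"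
    and "0 < measure \<nu> (cball x0 m1)"
    and bt: "beta_tilde x0 m1 \<nu> \<alpha> m1 = ereal b" "b \<le> 1/2"
  shows "(\<integral>y. max (- g y) 0 \<partial>\<nu>) \<le> 2 * b"
    and "m2 \<le> r \<Longrightarrow> beta x0 m1 \<nu> \<alpha>' r = ereal c \<Longrightarrow>
      (\<integral>y. indicator (- cball x0 r) y * max (g y) 0 \<partial>\<nu>) \<le> 2 * c"
proof -
  interpret prob_space \<nu> by fact
  have g: "g \<in> Gcls x0 m1 m2 \<nu> \<alpha> \<alpha>'" and "(\<integral>y. g y \<partial>\<nu>) = 1"
    using assms(3) unfolding Gnorm_def by blast+
  have "integrable \<nu> g" using g L2_integrable[OF finite_measure_axioms] unfolding Gcls_def by blast
  define G0 where "G0 = (\<integral>y. indicator (cball x0 m1) y * g y \<partial>\<nu>)"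
  have "0 \<le> b" using beta_tilde_nonneg[of \<alpha> m1 x0 m1 \<nu>] assms(4,7) bt(1) by (auto simp: less_imp_le)
  have neg_part: "(\<integral>y. max (- g y) 0 \<partial>\<nu>) \<le> b * G0"
    unfolding G0_def using assms(1,2) g \<open>0 \<le> b\<close>
  proof (rule Gcls_neg_part_le)
    show "\<forall>a\<ge>m1. 0 \<le> \<alpha> a" "\<forall>a\<ge>m2. 0 \<le> \<alpha>' a"
      using assms(4-7) tail_function_nonneg[of \<alpha>' m2] by (auto simp: less_imp_le)
    show "measure \<nu> (space \<nu> - cball x0 a) \<le> \<alpha> a * (measure \<nu> (cball x0 m1) * b)" if "m1 \<le> a" for a
      using bt(1) assms(4,7,8) that by (intro beta_tilde_tail_bound) (auto simp: less_imp_le)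
  qed
  have "G0 \<le> (\<integral>y. max (g y) 0 \<partial>\<nu>)"
    unfolding G0_def using \<open>integrable \<nu> g\<close> assms(2)
    by (intro integral_mono integrable_mult_indicator[of _ \<nu> g, simplified])
      (auto split: split_indicator)
  then have G0_le: "G0 \<le> 1 + b * G0"
    using integral_pos_part_eq[OF \<open>integrable \<nu> g\<close>] \<open>(\<integral>y. g y \<partial>\<nu>) = 1\<close> neg_part by simp
  have "G0 \<le> 2"
  proof (cases "0 \<le> G0")
    case True
    then have "b * G0 \<le> G0 / 2" using mult_right_mono[OF \<open>b \<le> 1/2\<close>] by simp
    then show ?thesis using G0_le by linarith
  qed simp
  show "(\<integral>y. max (- g y) 0 \<partial>\<nu>) \<le> 2 * b"
    using neg_part mult_left_mono[OF \<open>G0 \<le> 2\<close> \<open>0 \<le> b\<close>] by simp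
  assume "m2 \<le> r" and beta: "beta x0 m1 \<nu> \<alpha>' r = ereal c"
  have \<alpha>'_nonneg: "\<forall>a\<ge>r. 0 \<le> \<alpha>' a"
    using assms(4,5,6) \<open>m2 \<le> r\<close> tail_function_nonneg[of \<alpha>' m1] by auto
  note tail = beta_tail_bound[OF beta assms(8) \<alpha>'_nonneg]
  then have "0 \<le> c" using assms(8) by (smt (verit) measure_nonneg zero_le_mult_iff)
  have "(\<integral>y. indicator (- cball x0 r) y * max (g y) 0 \<partial>\<nu>) \<le> c * G0"
    unfolding G0_def using assms(1,2) g assms(5) \<open>m2 \<le> r\<close> \<open>0 \<le> c\<close>
  proof (rule Gcls_pos_tail_le)
    show "\<forall>a\<ge>m1. 0 \<le> \<alpha> a" using assms(4,7) by (auto simp: less_imp_le)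
    show "antimono_on {m2..} \<alpha>'" "\<forall>a\<ge>m2. 0 \<le> \<alpha>' a"
      using assms(4-6) tail_function_antimono tail_function_nonneg by auto
  qed (use tail in auto)
  also have "\<dots> \<le> 2 * c" using mult_left_mono[OF \<open>G0 \<le> 2\<close> \<open>0 \<le> c\<close>] by simp
  finally show "(\<integral>y. indicator (- cball x0 r) y * max (g y) 0 \<partial>\<nu>) \<le> 2 * c" .
qed

lemma integrable_Lop_integrand:
  fixes K :: "'a \<Rightarrow> 'a \<Rightarrow> real" and g :: "'a \<Rightarrow> real"
  assumes "integrable \<nu> g" "(\<lambda>y. K y x) \<in> borel_measurable \<nu>" "\<forall>y. \<bar>K y x\<bar> \<le> 1"
  shows "integrable \<nu> (\<lambda>y. K y x * g y)"
proof (rule Bochner_Integration.integrable_bound[OF assms(1)])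
  show "AE y in \<nu>. norm (K y x * g y) \<le> norm (g y)"
    using assms(3) by (auto simp: abs_mult intro!: mult_left_le_one_le)
qed (use assms in measurable)

lemma Lop_le_integral_pos_part:
  fixes K :: "'a \<Rightarrow> 'a \<Rightarrow> real" and g :: "'a \<Rightarrow> real"
  assumes "integrable \<nu> g" "(\<lambda>y. K y x) \<in> borel_measurable \<nu>" "\<forall>y. 0 \<le> K y x \<and> K y x \<le> 1"
  shows "Lop K \<nu> g x \<le> (\<integral>y. max (g y) 0 \<partial>\<nu>)"
  unfolding Lop_def
proof (rule integral_mono)
  show "integrable \<nu> (\<lambda>y. K y x * g y)"
    using assms by (intro integrable_Lop_integrand) auto
  show "K y x * g y \<le> max (g y) 0" for y
    using assms(3) by (cases "0 \<le> g y") (auto intro: mult_left_le_one_le mult_nonneg_nonpos)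
qed (use assms(1) in auto)

lemma Lop_ge_indicator:
  fixes K :: "'a \<Rightarrow> 'a \<Rightarrow> real" and g :: "'a \<Rightarrow> real"
  assumes "integrable \<nu> g" "(\<lambda>y. K y x) \<in> borel_measurable \<nu>" "\<forall>y. 0 \<le> K y x \<and> K y x \<le> 1"
    and "C \<in> sets \<nu>" "0 \<le> lr" "\<And>y. x \<in> C \<Longrightarrow> y \<in> C \<Longrightarrow> lr \<le> K y x"
  shows "lr * indicator C x * (\<integral>y. indicator C y * max (g y) 0 \<partial>\<nu>) - (\<integral>y. max (- g y) 0 \<partial>\<nu>)
    \<le> Lop K \<nu> g x"
proof -
  have int_pos: "integrable \<nu> (\<lambda>y. indicator C y * max (g y) 0)"
    using integrable_mult_indicator[of C \<nu> "\<lambda>y. max (g y) 0"] assms(1,4) by simp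
  have "lr * indicator C x * (\<integral>y. indicator C y * max (g y) 0 \<partial>\<nu>) - (\<integral>y. max (- g y) 0 \<partial>\<nu>)
      = (\<integral>y. lr * indicator C x * (indicator C y * max (g y) 0) - max (- g y) 0 \<partial>\<nu>)"
    using int_pos assms(1) by simp
  also have "\<dots> \<le> Lop K \<nu> g x"
    unfolding Lop_def
  proof (rule integral_mono)
    show "integrable \<nu> (\<lambda>y. K y x * g y)"
      using assms by (intro integrable_Lop_integrand) auto
    show "lr * indicator C x * (indicator C y * max (g y) 0) - max (- g y) 0 \<le> K y x * g y" for y
    proof (cases "0 \<le> g y")
      case True
      then show ?thesis
        using assms(3) assms(6)[of y] by (auto split: split_indicator intro: mult_right_mono)
    next
      case False
      then show ?thesis using assms(3) by (simp add: mult_le_cancel_right1)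
    qed
  qed (use int_pos assms(1) in auto)
  finally show ?thesis .
qed

lemma Lop_measurable:
  assumes "sets \<mu> = sets borel" "sets \<nu> = sets borel" "sigma_finite_measure \<nu>"
    and "(\<lambda>(x, y). K x y) \<in> borel_measurable (borel \<Otimes>\<^sub>M borel)" "g \<in> borel_measurable \<nu>"
  shows "Lop K \<nu> g \<in> borel_measurable \<mu>"
  unfolding Lop_def[abs_def]
proof (rule sigma_finite_measure.borel_measurable_lebesgue_integral[OF assms(3)])
  have "(\<lambda>(x, y). K y x * g y) \<in> borel_measurable (borel \<Otimes>\<^sub>M borel)"
    using assms(2,4,5) by measurable
  then show "(\<lambda>(x, y). K y x * g y) \<in> borel_measurable (\<mu> \<Otimes>\<^sub>M \<nu>)"
    using sets_pair_measure_cong[OF assms(1,2)] measurable_cong_sets by blast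
qed

lemma integral_Lop_mult_ge:
  fixes K :: "'a::topological_space \<Rightarrow> 'a \<Rightarrow> real" and f g :: "'a \<Rightarrow> real"
  assumes "prob_space \<mu>" "sets \<mu> = sets borel" "prob_space \<nu>" "sets \<nu> = sets borel"
    and K: "(\<lambda>(x, y). K x y) \<in> borel_measurable (borel \<Otimes>\<^sub>M borel)" "\<forall>x y. 0 < K x y \<and> K x y \<le> 1"
    and "C \<in> sets borel" "0 \<le> lr" "\<And>x y. x \<in> C \<Longrightarrow> y \<in> C \<Longrightarrow> lr \<le> K x y"
    and f: "integrable \<mu> f" "(\<integral>x. f x \<partial>\<mu>) = 1" and g: "integrable \<nu> g" "(\<integral>y. g y \<partial>\<nu>) = 1"
  shows "lr * (\<integral>y. indicator C y * max (g y) 0 \<partial>\<nu>) * (\<integral>x. indicator C x * max (f x) 0 \<partial>\<mu>)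
      - (\<integral>y. max (- g y) 0 \<partial>\<nu>) * (1 + (\<integral>x. max (- f x) 0 \<partial>\<mu>))
      - (1 + (\<integral>y. max (- g y) 0 \<partial>\<nu>)) * (\<integral>x. max (- f x) 0 \<partial>\<mu>)
    \<le> (\<integral>x. Lop K \<nu> g x * f x \<partial>\<mu>)"
proof -
  interpret \<nu>: prob_space \<nu> by fact
  let ?Pg = "\<integral>y. indicator C y * max (g y) 0 \<partial>\<nu>" and ?Ng = "\<integral>y. max (- g y) 0 \<partial>\<nu>"
  have K_slice: "(\<lambda>y. K y x) \<in> borel_measurable \<nu>" for x
  proof -
    have "(\<lambda>y. (y, x)) \<in> borel \<rightarrow>\<^sub>M borel \<Otimes>\<^sub>M borel" by measurable
    from measurable_compose[OF this K(1)] have "(\<lambda>y. K y x) \<in> borel_measurable borel" by simp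
    then show ?thesis using measurable_cong_sets[OF assms(4) refl] by blast
  qed
  have K_bounds: "\<forall>y. 0 \<le> K y x \<and> K y x \<le> 1" for x using K(2) by (auto simp: less_imp_le)
  have lower: "lr * ?Pg * indicator C x - ?Ng \<le> Lop K \<nu> g x" for x
    using Lop_ge_indicator[OF g(1) K_slice K_bounds, of C lr] assms(4,7,8,9) by (simp add: mult_ac)
  have upper: "Lop K \<nu> g x \<le> 1 + ?Ng" for x
    using Lop_le_integral_pos_part[OF g(1) K_slice K_bounds] integral_pos_part_eq[OF g(1)] g(2)
    by simp
  have "Lop K \<nu> g \<in> borel_measurable \<mu>"
    using assms(2,4) \<nu>.sigma_finite_measure_axioms K(1) borel_measurable_integrable[OF g(1)]
    by (rule Lop_measurable)
  from integral_mult_ge_of_bounds[OF f(1) this _ _ lower upper] show ?thesis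
    using integral_pos_part_eq[OF f(1)] f(2) assms(2,7,8) by simp
qed

lemma product_minus_cross_terms_ge:
  fixes E l Pg Pf Ng Nf a a' b t :: real
  assumes "l * Pg * Pf - Ng * (1 + Nf) - (1 + Ng) * Nf \<le> E"
    and "0 \<le> l" "l \<le> 1" "0 \<le> Pg" "0 \<le> Pf" "0 \<le> Ng" "0 \<le> Nf" "0 \<le> a" "0 \<le> t"
    and "Nf \<le> a'" "a' \<le> 1/2" "Ng \<le> 2 * b" "1 - a \<le> Pf" "1 - t \<le> Pg"
  shows "l - a' - 4 * b - a - t \<le> E"
proof -
  have "Ng * Nf \<le> Ng / 2" using mult_left_mono[of Nf "1/2" Ng] assms by simp
  then show ?thesis
    using mult_ge_one_minus_deficits[OF assms(2-5,14,13,8,9)] assms by (simp add: algebra_simps)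
qed

lemma integral_Lop_mult_ge_deficits:
  fixes K :: "'a::topological_space \<Rightarrow> 'a \<Rightarrow> real" and f g :: "'a \<Rightarrow> real"
  assumes "prob_space \<mu>" "sets \<mu> = sets borel" "prob_space \<nu>" "sets \<nu> = sets borel"
    and "(\<lambda>(x, y). K x y) \<in> borel_measurable (borel \<Otimes>\<^sub>M borel)" "\<forall>x y. 0 < K x y \<and> K x y \<le> 1"
    and "C \<in> sets borel" "0 \<le> lr" "lr \<le> 1" "\<And>x y. x \<in> C \<Longrightarrow> y \<in> C \<Longrightarrow> lr \<le> K x y"
    and f: "integrable \<mu> f" "(\<integral>x. f x \<partial>\<mu>) = 1" and g: "integrable \<nu> g" "(\<integral>y. g y \<partial>\<nu>) = 1"
    and "(\<integral>x. max (- f x) 0 \<partial>\<mu>) \<le> a'" "a' \<le> 1/2" "(\<integral>y. max (- g y) 0 \<partial>\<nu>) \<le> 2 * b"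
    and "1 - a \<le> (\<integral>x. indicator C x * max (f x) 0 \<partial>\<mu>)" "0 \<le> a"
  shows "lr - a' - 4 * b - a - (\<integral>y. indicator (- C) y * max (g y) 0 \<partial>\<nu>)
    \<le> (\<integral>x. Lop K \<nu> g x * f x \<partial>\<mu>)"
proof (rule product_minus_cross_terms_ge)
  show "1 - (\<integral>y. indicator (- C) y * max (g y) 0 \<partial>\<nu>) \<le> (\<integral>y. indicator C y * max (g y) 0 \<partial>\<nu>)"
    using integral_le_split_pos_part[OF g(1), of C] g(2) assms(4,7) sets_eq_imp_space_eq[OF assms(4)]
    by simp
qed (use integral_Lop_mult_ge[OF assms(1-8,10) f g] assms(8,9,15-19) in auto)

lemma ereal_lower_bound_weaken:
  fixes E l a a' a'' b :: real and B D :: ereal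
  assumes "\<And>c. B = ereal c \<Longrightarrow> l - a' - 4 * b - a - 2 * c \<le> E"
    and "0 \<le> B" "0 \<le> D" "0 \<le> a" "0 \<le> a''"
  shows "ereal l - ereal a' - 4 * ereal b - 4 * ereal a - 4 * ereal a'' - 5 * B - 5 * D \<le> ereal E"
proof (cases B)
  case (real c)
  show ?thesis
  proof (cases D)
    case (real d)
    then show ?thesis using assms \<open>B = ereal c\<close> assms(1)[of c] by simp
  qed (use assms \<open>B = ereal c\<close> in auto)
next
  case PInf
  then show ?thesis using assms(3) by (cases D) auto
qed (use assms in auto)

theorem lemma4p5:
  fixes x0 :: "'a::polish_space"
    and \<mu> \<nu> :: "'a measure"
    and m1 m2 r :: real
    and K :: "'a \<Rightarrow> 'a \<Rightarrow> real"
    and l \<alpha>1 \<alpha>1' \<alpha>2 \<alpha>2' :: "real \<Rightarrow> real"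
    and f g :: "'a \<Rightarrow> real"
  assumes "prob_space \<mu>" "sets \<mu> = sets borel"
    and "prob_space \<nu>" "sets \<nu> = sets borel"
    and "0 < m1" "m1 \<le> m2"
    and "(\<lambda>(x, y). K x y) \<in> borel_measurable (borel \<Otimes>\<^sub>M borel)"
    and "\<forall>x y. 0 < K x y \<and> K x y \<le> 1"
    and "lower_decay x0 K l"
    and "tail_function \<alpha>1" "tail_function \<alpha>1'"
    and "tail_function \<alpha>2" "tail_function \<alpha>2'"
    and "measure \<mu> (cball x0 m1) > 0" "measure \<nu> (cball x0 m1) > 0"
    and "\<forall>s>0. \<alpha>1 s > 0" "\<forall>s>0. \<alpha>2 s > 0"
    and "r \<ge> m2"
    and "\<alpha>1' m2 \<le> 0.5"
    and "beta_tilde x0 m1 \<nu> \<alpha>2 m1 \<le> 0.5"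
    and "l r \<le> 1"
    and "f \<in> Fnorm x0 m1 m2 \<mu> \<alpha>1 \<alpha>1'"
    and "g \<in> Gnorm x0 m1 m2 \<nu> \<alpha>2 \<alpha>2'"
  shows "ereal (\<integral>x. Lop K \<nu> g x * f x \<partial>\<mu>) \<ge>
           ereal (l r) - ereal (\<alpha>1' m2) - 4 * beta_tilde x0 m1 \<nu> \<alpha>2 m1
           - 4 * ereal (\<alpha>1 r) - 4 * ereal (\<alpha>1' r)
           - 5 * beta x0 m1 \<nu> \<alpha>2' r - 5 * beta_tilde x0 m1 \<nu> \<alpha>2 r"
proof -
  have "0 < r" "m1 \<le> r" using assms(5,6,18) by auto
  obtain b where bt: "beta_tilde x0 m1 \<nu> \<alpha>2 m1 = ereal b" and "b \<le> 1/2"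
    using assms(20) beta_tilde_nonneg[of \<alpha>2 m1 x0 m1 \<nu>] assms(5,17)
    by (cases "beta_tilde x0 m1 \<nu> \<alpha>2 m1") (auto simp: less_imp_le)
  have f: "f \<in> Fcls x0 m1 m2 \<mu> \<alpha>1 \<alpha>1'" "(\<integral>x. f x \<partial>\<mu>) = 1" and g: "(\<integral>y. g y \<partial>\<nu>) = 1"
    using assms(22,23) unfolding Fnorm_def Gnorm_def by blast+
  have "integrable \<mu> f" "integrable \<nu> g"
    using f(1) assms(23) L2_integrable prob_space.finite_measure assms(1,3)
    unfolding Fcls_def Gnorm_def Gcls_def by blast+
  have "0 \<le> l r" and l_K: "\<And>x y. x \<in> cball x0 r \<Longrightarrow> y \<in> cball x0 r \<Longrightarrow> l r \<le> K x y"
    using assms(9) \<open>0 < r\<close> unfolding lower_decay_def by auto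
  note g_bounds = Gnorm_neg_part_and_tail_le[OF assms(3,4,23,5,6,13,17,15) bt \<open>b \<le> 1/2\<close>]
  have "l r - \<alpha>1' m2 - 4 * b - \<alpha>1 r - (\<integral>y. indicator (- cball x0 r) y * max (g y) 0 \<partial>\<nu>)
      \<le> (\<integral>x. Lop K \<nu> g x * f x \<partial>\<mu>)"
  proof (rule integral_Lop_mult_ge_deficits[OF assms(1-4,7,8) _ \<open>0 \<le> l r\<close> assms(21) l_K
        \<open>integrable \<mu> f\<close> f(2) \<open>integrable \<nu> g\<close> g _ _ g_bounds(1)])
    show "(\<integral>x. max (- f x) 0 \<partial>\<mu>) \<le> \<alpha>1' m2"
      using Fcls_neg_part_le[OF assms(2) f(1)] f(2) by simp
    show "1 - \<alpha>1 r \<le> (\<integral>x. indicator (cball x0 r) x * max (f x) 0 \<partial>\<mu>)"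
      using Fcls_pos_part_ball_ge[OF prob_space.finite_measure[OF assms(1)] assms(2) f(1) \<open>m1 \<le> r\<close>]
        f(2) by simp
  qed (use assms(19) tail_function_nonneg[OF assms(10,5) \<open>m1 \<le> r\<close>] in auto)
  then have "l r - \<alpha>1' m2 - 4 * b - \<alpha>1 r - 2 * c \<le> (\<integral>x. Lop K \<nu> g x * f x \<partial>\<mu>)"
    if "beta x0 m1 \<nu> \<alpha>2' r = ereal c" for c
    using g_bounds(2)[OF assms(18) that] by linarith
  moreover have "0 \<le> beta x0 m1 \<nu> \<alpha>2' r"
    using tail_function_nonneg[OF assms(13,5) \<open>m1 \<le> r\<close>] by (rule beta_nonneg)
  moreover have "0 \<le> beta_tilde x0 m1 \<nu> \<alpha>2 r"
    using assms(17) \<open>0 < r\<close> by (intro beta_tilde_nonneg) (simp add: less_imp_le)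
  ultimately show ?thesis
    using ereal_lower_bound_weaken[where a'' = "\<alpha>1' r"] bt
      tail_function_nonneg[OF assms(10,5) \<open>m1 \<le> r\<close>] tail_function_nonneg[OF assms(11,5) \<open>m1 \<le> r\<close>]
    by simp
qed

end
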